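(* Let $m=2$. For generic $c\in\mathbb{C}^n$, \[\mathrm{rank}_p(\mathrm{Horn}(\mathcal{B},c))=\sum\nu_{ij},\] where the sum runs over unordered pairs $\{i,j\}$ of rows $b_i,b_j$ of $\mathcal{B}$ that are linearly independent and lie in the interiors of opposite quadrants of $\mathbb{Z}^2$.
   Context: $\mathcal{B}=(b_{ji})\in\mathbb{Z}^{n\times 2}$ ($n>2$) has rank 2, rows $b_j$ summing to zero. $\mathrm{Horn}(\mathcal{B},c)=D_2\langle H_1,H_2\rangle$, $H_i=Q_i-y_iP_i$, $P_i=\prod_{j:b_{ji}<0}\prod_{l=0}^{|b_{ji}|-1}(b_j\cdot\theta_y+c_j-l)$, $Q_i=\prod_{j:b_{ji}>0}\prod_{l=0}^{b_{ji}-1}(b_j\cdot\theta_y+c_j-l)$, $b_j\cdot\theta_y=b_{j1}y_1\partial_{y_1}+b_{j2}y_2\partial_{y_2}$. $\mathrm{rank}_p$ is the dimension of the space of Puiseux polynomial solutions (finite linear combinations of monomials with complex exponents). $\nu_{ij}=\min(|b_{i1}b_{j2}|,|b_{j1}b_{i2}|)$ when $b_i,b_j$ lie in the interiors of opposite quadrants. Generic: outside an exceptional measure-zero set. *)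

theory Defs
  imports "HOL-Analysis.Analysis" "HOL-Library.Function_Algebras"
begin

text \<open>Rows of the n x 2 integer matrix B are indexed by a finite type 'n;
  row j is the pair (b_j1, b_j2). Column index i ranges over {1,2}.\<close>

definition entry :: "int \<times> int \<Rightarrow> nat \<Rightarrow> int" where
  "entry b i = (if i = 1 then fst b else snd b)"

text \<open>A Puiseux polynomial in y1,y2 is represented by its coefficient function
  a : C^2 -> C (exponent vector alpha = (alpha1, alpha2) maps to the coefficient
  of y^alpha), with finite support.\<close>

type_synonym puiseux = "complex \<times> complex \<Rightarrow> complex"

definition is_puiseux_poly :: "puiseux \<Rightarrow> bool" where
  "is_puiseux_poly a \<longleftrightarrow> finite {\<alpha>. a \<alpha> \<noteq> 0}"

text \<open>Euler operators: theta_{y_k} y^alpha = alpha_k y^alpha, so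
  (b . theta_y) y^alpha = (b . alpha) y^alpha.\<close>

definition bdot :: "int \<times> int \<Rightarrow> complex \<times> complex \<Rightarrow> complex" where
  "bdot b \<alpha> = of_int (fst b) * fst \<alpha> + of_int (snd b) * snd \<alpha>"

definition unitexp :: "nat \<Rightarrow> complex \<times> complex" where
  "unitexp i = (if i = 1 then (1, 0) else (0, 1))"

text \<open>Symbols of P_i and Q_i: P_i y^alpha = Psym B c i alpha * y^alpha etc.\<close>

definition Psym :: "('n \<Rightarrow> int \<times> int) \<Rightarrow> (complex ^ 'n) \<Rightarrow> nat \<Rightarrow> complex \<times> complex \<Rightarrow> complex" where
  "Psym B c i \<alpha> = (\<Prod>j\<in>{j. entry (B j) i < 0}.
      \<Prod>l<nat \<bar>entry (B j) i\<bar>. (bdot (B j) \<alpha> + c $ j - of_nat l))"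

definition Qsym :: "('n \<Rightarrow> int \<times> int) \<Rightarrow> (complex ^ 'n) \<Rightarrow> nat \<Rightarrow> complex \<times> complex \<Rightarrow> complex" where
  "Qsym B c i \<alpha> = (\<Prod>j\<in>{j. entry (B j) i > 0}.
      \<Prod>l<nat (entry (B j) i). (bdot (B j) \<alpha> + c $ j - of_nat l))"

text \<open>Action of H_i = Q_i - y_i P_i on a Puiseux polynomial, coefficientwise:
  coefficient of y^beta in H_i(f) is Q_i(beta) a(beta) - P_i(beta - e_i) a(beta - e_i).\<close>

definition Hop :: "('n \<Rightarrow> int \<times> int) \<Rightarrow> (complex ^ 'n) \<Rightarrow> nat \<Rightarrow> puiseux \<Rightarrow> puiseux" where
  "Hop B c i a = (\<lambda>\<beta>. Qsym B c i \<beta> * a \<beta> - Psym B c i (\<beta> - unitexp i) * a (\<beta> - unitexp i))"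

text \<open>Puiseux polynomial solutions of Horn(B,c) = D_2<H_1,H_2>: those annihilated by
  the left ideal, i.e. by both generators.\<close>

definition horn_puiseux_solutions :: "('n \<Rightarrow> int \<times> int) \<Rightarrow> (complex ^ 'n) \<Rightarrow> puiseux set" where
  "horn_puiseux_solutions B c =
     {a. is_puiseux_poly a \<and> Hop B c 1 a = 0 \<and> Hop B c 2 a = 0}"

definition cscale :: "complex \<Rightarrow> puiseux \<Rightarrow> puiseux" where
  "cscale z a = (\<lambda>\<alpha>. z * a \<alpha>)"

text \<open>rank_p: the complex dimension of the solution space (asserted finite separately).\<close>

definition rank_p :: "('n \<Rightarrow> int \<times> int) \<Rightarrow> (complex ^ 'n) \<Rightarrow> nat" where
  "rank_p B c = vector_space.dim cscale (horn_puiseux_solutions B c)"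

definition rank_p_finite :: "('n \<Rightarrow> int \<times> int) \<Rightarrow> (complex ^ 'n) \<Rightarrow> bool" where
  "rank_p_finite B c \<longleftrightarrow>
     (\<exists>S. finite S \<and> module.span cscale S = horn_puiseux_solutions B c)"

definition det2 :: "int \<times> int \<Rightarrow> int \<times> int \<Rightarrow> int" where
  "det2 b b' = fst b * snd b' - snd b * fst b'"

definition opposite_open_quadrants :: "int \<times> int \<Rightarrow> int \<times> int \<Rightarrow> bool" where
  "opposite_open_quadrants b b' \<longleftrightarrow>
     fst b \<noteq> 0 \<and> snd b \<noteq> 0 \<and>
     sgn (fst b') = - sgn (fst b) \<and> sgn (snd b') = - sgn (snd b)"

definition nu :: "int \<times> int \<Rightarrow> int \<times> int \<Rightarrow> nat" where
  "nu b b' = min (nat \<bar>fst b * snd b'\<bar>) (nat \<bar>fst b' * snd b\<bar>)"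

end

theory Submission
  imports Defs
begin

text \<open>For generic \<open>c\<close> no nontrivial integer combination of the entries of \<open>c\<close> is an
  integer. Hence at any exponent \<open>\<beta>\<close> at most two of the values \<open>b\<^sub>l\<cdot>\<beta> + c\<^sub>l\<close> are integers,
  and two integral rows are linearly independent. The recurrences \<open>H\<^sub>1, H\<^sub>2\<close> force a Puiseux
  polynomial solution to be supported where \<open>Q\<^sub>k\<close> and \<open>P\<^sub>k\<close> vanish at the extreme points of its
  support, which needs integral rows with both signs in both columns: so every point of the
  support belongs to a pair \<open>b\<^sub>i, b\<^sub>j\<close> in opposite open quadrants, with \<open>(b\<^sub>i\<cdot>\<beta> + c\<^sub>i,
  b\<^sub>j\<cdot>\<beta> + c\<^sub>j) = z \<in> \<int>\<^sup>2\<close>. In these coordinates the solutions are exactly the \<open>\<Gamma>\<close>-series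
  \<open>1 / \<Prod>\<^sub>l \<Gamma>(b\<^sub>l\<cdot>\<beta> + c\<^sub>l + 1)\<close> restricted to unions of components of a graph on
  \<open>\<nat>\<^sup>2\<close> whose edges are the two column vectors \<open>(b\<^sub>i\<^sub>k, b\<^sub>j\<^sub>k)\<close>, and that graph has
  \<open>\<nu>\<^sub>i\<^sub>j\<close> components.\<close>

definition nongeneric_params :: "(complex ^ 'n::finite) set" where
  "nongeneric_params = (\<Union>\<alpha>\<in>(UNIV :: ('n \<Rightarrow> int) set) - {0}. \<Union>q\<in>(UNIV :: int set).
      {c. (\<Sum>l\<in>UNIV. of_int (\<alpha> l) * c $ l) = of_int q})"

lemma negligible_integer_relation:
  fixes \<alpha> :: "'n::finite \<Rightarrow> int" and q :: int
  assumes "\<alpha> \<noteq> 0"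
  shows "negligible {c :: complex ^ 'n. (\<Sum>l\<in>UNIV. of_int (\<alpha> l) * c $ l) = of_int q}"
proof -
  define a :: "complex ^ 'n" where "a = (\<chi> l. of_int (\<alpha> l))"
  have "a \<noteq> 0"
    using assms by (auto simp: a_def vec_eq_iff fun_eq_iff)
  moreover have "{c. (\<Sum>l\<in>UNIV. of_int (\<alpha> l) * c $ l) = (of_int q :: complex)} \<subseteq> {x. a \<bullet> x = of_int q}"
  proof clarify
    fix c :: "complex ^ 'n"
    assume "(\<Sum>l\<in>UNIV. of_int (\<alpha> l) * c $ l) = (of_int q :: complex)"
    moreover have "a \<bullet> c = Re (\<Sum>l\<in>UNIV. of_int (\<alpha> l) * c $ l)"
      by (simp add: a_def inner_vec_def inner_complex_def)
    ultimately show "a \<bullet> c = of_int q" by simp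
  qed
  ultimately show ?thesis
    using negligible_hyperplane negligible_subset by blast
qed

lemma nongeneric_params_null: "(nongeneric_params :: (complex ^ 'n::finite) set) \<in> null_sets lebesgue"
proof -
  have "negligible (nongeneric_params :: (complex ^ 'n) set)"
    unfolding nongeneric_params_def
    by (intro negligible_countable_Union countable_image countable_UN)
       (auto intro: negligible_integer_relation)
  then show ?thesis by (simp add: negligible_iff_null_sets)
qed

definition falling_factorial :: "complex \<Rightarrow> nat \<Rightarrow> complex" where
  "falling_factorial x n = (\<Prod>m<n. x - of_nat m)"

lemma falling_factorial_eq_0_iff: "falling_factorial x n = 0 \<longleftrightarrow> (\<exists>m<n. x = of_nat m)"
  by (auto simp: falling_factorial_def)

lemma falling_factorial_rGamma:
  "falling_factorial x n * rGamma (x + 1) = rGamma (x - of_nat n + 1)"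
proof (induction n)
  case 0
  then show ?case by (simp add: falling_factorial_def)
next
  case (Suc n)
  have "falling_factorial x (Suc n) * rGamma (x + 1) = (x - of_nat n) * rGamma (x - of_nat n + 1)"
    using Suc by (simp add: falling_factorial_def algebra_simps)
  also have "\<dots> = rGamma (x - of_nat (Suc n) + 1)"
    using rGamma_plus1[of "x - of_nat n"] by simp
  finally show ?case .
qed

definition row_form :: "('n \<Rightarrow> int \<times> int) \<Rightarrow> complex ^ 'n \<Rightarrow> 'n \<Rightarrow> complex \<times> complex \<Rightarrow> complex" where
  "row_form B c l \<beta> = bdot (B l) \<beta> + c $ l"

lemma bdot_add: "bdot b (x + y) = bdot b x + bdot b y"
  by (simp add: bdot_def algebra_simps)

lemma bdot_diff: "bdot b (x - y) = bdot b x - bdot b y"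
  by (simp add: bdot_def algebra_simps)

lemma bdot_unitexp: "bdot b (unitexp k) = of_int (entry b k)"
  by (simp add: bdot_def unitexp_def entry_def)

lemma row_form_add: "row_form B c l (\<beta> + x) = row_form B c l \<beta> + bdot (B l) x"
  by (simp add: row_form_def bdot_add)

lemma Qsym_falling_factorial:
  "Qsym B c k \<beta> =
     (\<Prod>l\<in>{l. entry (B l) k > 0}. falling_factorial (row_form B c l \<beta>) (nat (entry (B l) k)))"
  by (simp add: Qsym_def falling_factorial_def row_form_def)

lemma Psym_falling_factorial:
  "Psym B c k \<beta> =
     (\<Prod>l\<in>{l. entry (B l) k < 0}. falling_factorial (row_form B c l \<beta>) (nat \<bar>entry (B l) k\<bar>))"
  by (simp add: Psym_def falling_factorial_def row_form_def)

lemma Qsym_eq_0_iff: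
  fixes B :: "'n::finite \<Rightarrow> int \<times> int"
  shows "Qsym B c k \<beta> = 0 \<longleftrightarrow>
    (\<exists>l. entry (B l) k > 0 \<and> (\<exists>m < nat (entry (B l) k). row_form B c l \<beta> = of_nat m))"
  unfolding Qsym_falling_factorial by (subst prod_zero_iff) (auto simp: falling_factorial_eq_0_iff)

lemma Psym_eq_0_iff:
  fixes B :: "'n::finite \<Rightarrow> int \<times> int"
  shows "Psym B c k \<beta> = 0 \<longleftrightarrow>
    (\<exists>l. entry (B l) k < 0 \<and> (\<exists>m < nat \<bar>entry (B l) k\<bar>. row_form B c l \<beta> = of_nat m))"
  unfolding Psym_falling_factorial by (subst prod_zero_iff) (auto simp: falling_factorial_eq_0_iff)

text \<open>The coefficients of the \<Gamma>-series solution \<open>\<Sum> y\<^sup>\<beta> / \<Prod>\<^sub>l \<Gamma>(b\<^sub>l\<cdot>\<beta> + c\<^sub>l + 1)\<close>.\<close>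

definition gamma_coeff :: "('n::finite \<Rightarrow> int \<times> int) \<Rightarrow> complex ^ 'n \<Rightarrow> complex \<times> complex \<Rightarrow> complex" where
  "gamma_coeff B c \<beta> = (\<Prod>l\<in>UNIV. rGamma (row_form B c l \<beta> + 1))"

lemma gamma_coeff_recurrence:
  fixes B :: "'n::finite \<Rightarrow> int \<times> int"
  shows "Qsym B c k \<beta> * gamma_coeff B c \<beta> =
         Psym B c k (\<beta> - unitexp k) * gamma_coeff B c (\<beta> - unitexp k)"
proof -
  define t where "t l = row_form B c l \<beta>" for l
  define e where "e l = entry (B l) k" for l
  define q where "q l = (if e l > 0 then falling_factorial (t l) (nat (e l)) else 1)" for l
  define p where "p l = (if e l < 0 then falling_factorial (t l - of_int (e l)) (nat \<bar>e l\<bar>) else 1)" for l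
  have shift: "row_form B c l (\<beta> - unitexp k) = t l - of_int (e l)" for l
    by (simp add: t_def e_def row_form_def bdot_diff bdot_unitexp)
  have Q: "Qsym B c k \<beta> = (\<Prod>l\<in>UNIV. q l)"
    unfolding Qsym_falling_factorial q_def t_def e_def by (subst prod.inter_filter[symmetric]) auto
  have P: "Psym B c k (\<beta> - unitexp k) = (\<Prod>l\<in>UNIV. p l)"
    unfolding Psym_falling_factorial p_def shift e_def by (subst prod.inter_filter[symmetric]) auto
  have row: "q l * rGamma (t l + 1) = p l * rGamma (t l - of_int (e l) + 1)" for l
  proof -
    consider "e l > 0" | "e l < 0" | "e l = 0" by linarith
    then show ?thesis
    proof cases
      case 1
      then show ?thesis
        using falling_factorial_rGamma[of "t l" "nat (e l)"] by (simp add: q_def p_def)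
    next
      case 2
      then show ?thesis
        using falling_factorial_rGamma[of "t l - of_int (e l)" "nat \<bar>e l\<bar>"] by (simp add: q_def p_def)
    qed (simp add: q_def p_def)
  qed
  show ?thesis
    by (simp add: Q P gamma_coeff_def shift row prod.distrib[symmetric] flip: t_def)
qed

lemma horn_solution_recurrence:
  assumes "a \<in> horn_puiseux_solutions B c" and "k = 1 \<or> k = 2"
  shows "Qsym B c k \<beta> * a \<beta> = Psym B c k (\<beta> - unitexp k) * a (\<beta> - unitexp k)"
proof -
  have "Hop B c k a \<beta> = 0"
    using assms by (auto simp: horn_puiseux_solutions_def)
  then show ?thesis by (simp add: Hop_def)
qed

lemma horn_solution_finite_support:
  "a \<in> horn_puiseux_solutions B c \<Longrightarrow> finite {\<alpha>. a \<alpha> \<noteq> 0}"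
  by (simp add: horn_puiseux_solutions_def is_puiseux_poly_def)

interpretation ps: vector_space cscale
  by unfold_locales (simp_all add: cscale_def fun_eq_iff algebra_simps)

lemma sum_fun_apply: "(\<Sum>x\<in>A. f x) \<beta> = (\<Sum>x\<in>A. f x \<beta>)"
  by (induction A rule: infinite_finite_induct) auto

lemma horn_solutions_subspace: "ps.subspace (horn_puiseux_solutions B c)"
proof -
  have Hop_linear: "Hop B c k (a + b) = Hop B c k a + Hop B c k b"
    "Hop B c k (cscale z a) = cscale z (Hop B c k a)" for k a b z
    by (auto simp: Hop_def cscale_def fun_eq_iff algebra_simps)
  have "{\<alpha>. (a + b) \<alpha> \<noteq> 0} \<subseteq> {\<alpha>. a \<alpha> \<noteq> 0} \<union> {\<alpha>. b \<alpha> \<noteq> 0}"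
    "{\<alpha>. cscale z a \<alpha> \<noteq> 0} \<subseteq> {\<alpha>. a \<alpha> \<noteq> 0}" for a b :: puiseux and z
    by (auto simp: cscale_def)
  then have "is_puiseux_poly (a + b)" "is_puiseux_poly (cscale z a)"
    if "is_puiseux_poly a" "is_puiseux_poly b" for a b z
    using that unfolding is_puiseux_poly_def by (meson finite_UnI finite_subset)+
  moreover have "Hop B c k 0 = 0" for k
    by (simp add: Hop_def fun_eq_iff)
  moreover have "is_puiseux_poly 0"
    by (simp add: is_puiseux_poly_def)
  ultimately show ?thesis
    unfolding ps.subspace_def horn_puiseux_solutions_def by (auto simp: Hop_linear)
qed

lemma independent_disjoint_supports:
  fixes v :: "'i \<Rightarrow> puiseux" and peak :: "'i \<Rightarrow> complex \<times> complex"
  assumes "finite I" and peak: "\<And>x. x \<in> I \<Longrightarrow> v x (peak x) \<noteq> 0"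
    and disjoint: "\<And>x y \<beta>. x \<in> I \<Longrightarrow> y \<in> I \<Longrightarrow> v x \<beta> \<noteq> 0 \<Longrightarrow> v y \<beta> \<noteq> 0 \<Longrightarrow> x = y"
  shows "ps.independent (v ` I)" "inj_on v I"
proof -
  show "inj_on v I"
  proof (rule inj_onI)
    fix x y assume "x \<in> I" "y \<in> I" "v x = v y"
    then show "x = y"
      using disjoint[of x y "peak x"] peak[of x] by simp
  qed
  show "ps.independent (v ` I)"
  proof (rule ps.independent_if_scalars_zero)
    fix f w assume sum0: "(\<Sum>u\<in>v ` I. cscale (f u) u) = 0" and w: "w \<in> v ` I"
    then obtain x where x: "x \<in> I" "w = v x"
      by blast
    have "(\<Sum>u\<in>v ` I. f u * u (peak x)) = (\<Sum>u\<in>{w}. f u * u (peak x))"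
    proof (rule sum.mono_neutral_right)
      show "\<forall>u\<in>v ` I - {w}. f u * u (peak x) = 0"
      proof
        fix u assume "u \<in> v ` I - {w}"
        then obtain y where y: "y \<in> I" "u = v y" "y \<noteq> x"
          using x by auto
        then have "v y (peak x) = 0"
          using disjoint[of x y "peak x"] peak x(1) by auto
        then show "f u * u (peak x) = 0"
          using y by simp
      qed
    qed (use \<open>finite I\<close> w in auto)
    moreover have "(\<Sum>u\<in>v ` I. f u * u (peak x)) = 0"
      using fun_cong[OF sum0, of "peak x"] by (simp add: sum_fun_apply cscale_def)
    ultimately show "f w = 0"
      using peak x by simp
  qed (use \<open>finite I\<close> in simp)
qed

lemma sum_disjoint_supports:
  fixes v :: "'i \<Rightarrow> puiseux"
  assumes "finite I"
    and disjoint: "\<And>x y \<beta>. x \<in> I \<Longrightarrow> y \<in> I \<Longrightarrow> v x \<beta> \<noteq> 0 \<Longrightarrow> v y \<beta> \<noteq> 0 \<Longrightarrow> x = y"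
    and covered: "\<And>\<beta>. a \<beta> \<noteq> 0 \<Longrightarrow> \<exists>x\<in>I. v x \<beta> \<noteq> 0"
    and multiple: "\<And>x \<beta>. x \<in> I \<Longrightarrow> v x \<beta> \<noteq> 0 \<Longrightarrow> a \<beta> = k x * v x \<beta>"
  shows "a = (\<Sum>x\<in>I. cscale (k x) (v x))"
proof
  fix \<beta>
  show "a \<beta> = (\<Sum>x\<in>I. cscale (k x) (v x)) \<beta>"
  proof (cases "\<exists>x\<in>I. v x \<beta> \<noteq> 0")
    case True
    then obtain x where x: "x \<in> I" "v x \<beta> \<noteq> 0"
      by blast
    have "(\<Sum>y\<in>I. k y * v y \<beta>) = (\<Sum>y\<in>{x}. k y * v y \<beta>)"
    proof (rule sum.mono_neutral_right)
      show "\<forall>y\<in>I - {x}. k y * v y \<beta> = 0"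
      proof
        fix y assume "y \<in> I - {x}"
        then have "v y \<beta> = 0"
          using disjoint[of x y \<beta>] x by auto
        then show "k y * v y \<beta> = 0"
          by simp
      qed
    qed (use \<open>finite I\<close> x in auto)
    then show ?thesis
      using multiple[OF x] by (simp add: sum_fun_apply cscale_def)
  next
    case False
    then have "a \<beta> = 0"
      using covered[of \<beta>] by blast
    with False show ?thesis
      by (simp add: sum_fun_apply cscale_def)
  qed
qed

lemma finite_int_pairs_lower_corner:
  fixes X :: "(int \<times> int) set"
  assumes "finite X" "X \<noteq> {}"
  obtains x where "x \<in> X" "x - (1, 0) \<notin> X" "x - (0, 1) \<notin> X"
proof -
  define m1 where "m1 = Min (fst ` X)"
  define X1 where "X1 = {x\<in>X. fst x = m1}"
  have "m1 \<in> fst ` X"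
    using assms by (simp add: m1_def)
  then have "finite X1" "X1 \<noteq> {}"
    using assms by (auto simp: X1_def)
  define m2 where "m2 = Min (snd ` X1)"
  have "m2 \<in> snd ` X1"
    using \<open>finite X1\<close> \<open>X1 \<noteq> {}\<close> by (simp add: m2_def)
  then obtain x where x: "x \<in> X1" "snd x = m2"
    by (metis imageE)
  have "x - (1, 0) \<notin> X"
  proof
    assume "x - (1, 0) \<in> X"
    then have "fst x - 1 \<in> fst ` X"
      by (metis fst_diff fst_conv imageI)
    then have "m1 \<le> fst x - 1"
      unfolding m1_def by (rule Min_le[OF finite_imageI[OF \<open>finite X\<close>]])
    then show False
      using x(1) by (simp add: X1_def)
  qed
  moreover have "x - (0, 1) \<notin> X"
  proof
    assume "x - (0, 1) \<in> X"
    then have "x - (0, 1) \<in> X1"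
      using x(1) by (simp add: X1_def)
    then have "snd x - 1 \<in> snd ` X1"
      by (metis snd_diff snd_conv imageI)
    then have "m2 \<le> snd x - 1"
      unfolding m2_def by (rule Min_le[OF finite_imageI[OF \<open>finite X1\<close>]])
    then show False
      using x(2) by simp
  qed
  moreover have "x \<in> X"
    using x(1) by (simp add: X1_def)
  ultimately show thesis
    using that by blast
qed

lemma finite_int_pairs_upper_corner:
  fixes X :: "(int \<times> int) set"
  assumes "finite X" "X \<noteq> {}"
  obtains x where "x \<in> X" "x + (1, 0) \<notin> X" "x + (0, 1) \<notin> X"
proof -
  obtain y where "y \<in> uminus ` X" "y - (1, 0) \<notin> uminus ` X" "y - (0, 1) \<notin> uminus ` X"
    using finite_int_pairs_lower_corner[of "uminus ` X"] assms by auto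
  moreover have "- y + d \<notin> X" if "y - d \<notin> uminus ` X" for d
    using that rev_image_eqI[of "- y + d" X "y - d" uminus] by auto
  ultimately have "- y \<in> X" "- y + (1, 0) \<notin> X" "- y + (0, 1) \<notin> X"
    by auto
  then show thesis using that by blast
qed

definition of_int_pair :: "int \<times> int \<Rightarrow> complex \<times> complex" where
  "of_int_pair x = (of_int (fst x), of_int (snd x))"

lemma of_int_pair_add: "of_int_pair (x + y) = of_int_pair x + of_int_pair y"
  and of_int_pair_diff: "of_int_pair (x - y) = of_int_pair x - of_int_pair y"
  and of_int_pair_unit: "of_int_pair (1, 0) = unitexp 1" "of_int_pair (0, 1) = unitexp 2"
  by (simp_all add: of_int_pair_def unitexp_def)

lemma row_form_lattice_shift_Ints:
  "row_form B c l (\<beta> + of_int_pair x) \<in> \<int> \<longleftrightarrow> row_form B c l \<beta> \<in> \<int>"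
proof -
  have "row_form B c l (\<beta> + of_int_pair x) =
        row_form B c l \<beta> + of_int (fst (B l) * fst x + snd (B l) * snd x)"
    by (simp add: row_form_add bdot_def of_int_pair_def)
  then show ?thesis
    by (metis Ints_add Ints_diff Ints_of_int add_diff_cancel_right')
qed

text \<open>At a lower corner of the support within \<open>\<beta> + \<int>\<^sup>2\<close> both \<open>Q\<^sub>k\<close> must vanish, at an upper
  corner both \<open>P\<^sub>k\<close>; each vanishing factor makes some \<open>b\<^sub>l\<cdot>\<beta> + c\<^sub>l\<close> an integer.\<close>

lemma horn_solution_support_integral_rows:
  fixes B :: "'n::finite \<Rightarrow> int \<times> int"
  assumes sol: "a \<in> horn_puiseux_solutions B c" and "a \<beta> \<noteq> 0"
  obtains l1 l2 l3 l4 where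
    "entry (B l1) 1 > 0" "entry (B l2) 1 < 0" "entry (B l3) 2 > 0" "entry (B l4) 2 < 0"
    "\<forall>l\<in>{l1, l2, l3, l4}. row_form B c l \<beta> \<in> \<int>"
proof -
  define X where "X = {x. a (\<beta> + of_int_pair x) \<noteq> 0}"
  have "inj (\<lambda>x. \<beta> + of_int_pair x)"
    by (auto simp: inj_def of_int_pair_def prod_eq_iff)
  then have "finite X"
    unfolding X_def using finite_vimageI[OF horn_solution_finite_support[OF sol]] by (simp add: vimage_def)
  have "0 \<in> X"
    using \<open>a \<beta> \<noteq> 0\<close> by (simp add: X_def of_int_pair_def flip: zero_prod_def)
  then have "X \<noteq> {}"
    by blast
  obtain x0 where x0: "x0 \<in> X" "x0 - (1, 0) \<notin> X" "x0 - (0, 1) \<notin> X"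
    using finite_int_pairs_lower_corner[OF \<open>finite X\<close> \<open>X \<noteq> {}\<close>] .
  obtain x1 where x1: "x1 \<in> X" "x1 + (1, 0) \<notin> X" "x1 + (0, 1) \<notin> X"
    using finite_int_pairs_upper_corner[OF \<open>finite X\<close> \<open>X \<noteq> {}\<close>] .
  define \<beta>0 where "\<beta>0 = \<beta> + of_int_pair x0"
  define \<beta>1 where "\<beta>1 = \<beta> + of_int_pair x1"
  have "a \<beta>0 \<noteq> 0" "a (\<beta>0 - unitexp 1) = 0" "a (\<beta>0 - unitexp 2) = 0"
    using x0 by (simp_all add: X_def \<beta>0_def of_int_pair_diff of_int_pair_unit add_diff_eq)
  then have "Qsym B c 1 \<beta>0 = 0" "Qsym B c 2 \<beta>0 = 0"
    using horn_solution_recurrence[OF sol, of 1 \<beta>0] horn_solution_recurrence[OF sol, of 2 \<beta>0]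
    by simp_all
  moreover have "a \<beta>1 \<noteq> 0" "a (\<beta>1 + unitexp 1) = 0" "a (\<beta>1 + unitexp 2) = 0"
    using x1 by (simp_all add: X_def \<beta>1_def of_int_pair_add of_int_pair_unit add.assoc)
  then have "Psym B c 1 \<beta>1 = 0" "Psym B c 2 \<beta>1 = 0"
    using horn_solution_recurrence[OF sol, of 1 "\<beta>1 + unitexp 1"]
      horn_solution_recurrence[OF sol, of 2 "\<beta>1 + unitexp 2"]
    by simp_all
  moreover have "row_form B c l \<beta>0 \<in> \<int> \<longleftrightarrow> row_form B c l \<beta> \<in> \<int>"
    "row_form B c l \<beta>1 \<in> \<int> \<longleftrightarrow> row_form B c l \<beta> \<in> \<int>" for l
    by (simp_all add: \<beta>0_def \<beta>1_def row_form_lattice_shift_Ints)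
  ultimately have "\<exists>l. entry (B l) k > 0 \<and> row_form B c l \<beta> \<in> \<int>"
    "\<exists>l. entry (B l) k < 0 \<and> row_form B c l \<beta> \<in> \<int>" if "k = 1 \<or> k = 2" for k
    using that unfolding Qsym_eq_0_iff Psym_eq_0_iff by (metis Ints_of_nat)+
  then show thesis
    using that by (metis insert_iff singletonD)
qed

locale generic_params =
  fixes B :: "'r::{finite,linorder} \<Rightarrow> int \<times> int" and c :: "complex ^ ('r::{finite,linorder})"
  assumes no_integer_relation:
    "\<And>(\<alpha> :: 'r \<Rightarrow> int) (q :: int). \<alpha> \<noteq> 0 \<Longrightarrow> (\<Sum>l\<in>UNIV. of_int (\<alpha> l) * c $ l) \<noteq> of_int q"
begin

abbreviation "t \<equiv> row_form B c"

text \<open>An integer relation among the rows of \<open>B\<close> turns into one among the entries of \<open>c\<close> as soon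
  as the corresponding \<open>b\<^sub>l\<cdot>\<beta> + c\<^sub>l\<close> are integers.\<close>

lemma row_relation_not_integral:
  fixes \<alpha> :: "'r \<Rightarrow> int"
  assumes "\<alpha> \<noteq> 0"
    and "(\<Sum>l\<in>UNIV. \<alpha> l * fst (B l)) = 0" "(\<Sum>l\<in>UNIV. \<alpha> l * snd (B l)) = 0"
    and "\<And>l. \<alpha> l \<noteq> 0 \<Longrightarrow> t l \<beta> \<in> \<int>"
  shows False
proof -
  have "(\<Sum>l\<in>UNIV. of_int (\<alpha> l) * t l \<beta>) =
      (\<Sum>l\<in>UNIV. of_int (\<alpha> l) * c $ l) + of_int (\<Sum>l\<in>UNIV. \<alpha> l * fst (B l)) * fst \<beta>
        + of_int (\<Sum>l\<in>UNIV. \<alpha> l * snd (B l)) * snd \<beta>"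
    by (simp add: row_form_def bdot_def algebra_simps sum.distrib sum_distrib_left sum_distrib_right)
  then have "(\<Sum>l\<in>UNIV. of_int (\<alpha> l) * c $ l) = (\<Sum>l\<in>UNIV. of_int (\<alpha> l) * t l \<beta>)"
    using assms(2,3) by simp
  moreover have "(\<Sum>l\<in>UNIV. of_int (\<alpha> l) * t l \<beta>) \<in> \<int>"
    using assms(4) by (intro Ints_sum) (metis Ints_mult Ints_of_int mult_zero_left of_int_0 Ints_0)
  ultimately show False
    using no_integer_relation[OF assms(1)] by (metis Ints_cases)
qed

lemma row_relation_not_integral_on:
  fixes \<alpha> :: "'r \<Rightarrow> int"
  assumes "finite S" "\<exists>l\<in>S. \<alpha> l \<noteq> 0"
    and "(\<Sum>l\<in>S. \<alpha> l * fst (B l)) = 0" "(\<Sum>l\<in>S. \<alpha> l * snd (B l)) = 0"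
    and "\<forall>l\<in>S. t l \<beta> \<in> \<int>"
  shows False
proof -
  define \<alpha>' where "\<alpha>' l = (if l \<in> S then \<alpha> l else 0)" for l
  have "(\<Sum>l\<in>UNIV. \<alpha>' l * h (B l)) = (\<Sum>l\<in>UNIV. if l \<in> S then \<alpha> l * h (B l) else 0)" for h
    by (intro sum.cong) (simp_all add: \<alpha>'_def)
  also have "\<dots> h = (\<Sum>l\<in>S. \<alpha> l * h (B l))" for h
    by (simp flip: sum.inter_restrict)
  finally have "(\<Sum>l\<in>UNIV. \<alpha>' l * h (B l)) = (\<Sum>l\<in>S. \<alpha> l * h (B l))" for h .
  then show False
    using assms by (intro row_relation_not_integral[of \<alpha>' \<beta>]) (auto simp: \<alpha>'_def fun_eq_iff split: if_splits)
qed

lemma integral_rows_independent: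
  assumes "l \<noteq> k" "t l \<beta> \<in> \<int>" "t k \<beta> \<in> \<int>"
  shows "det2 (B l) (B k) \<noteq> 0"
proof
  assume det: "det2 (B l) (B k) = 0"
  show False
  proof (cases "B l = 0")
    case True
    then show False
      using assms by (intro row_relation_not_integral_on[of "{l}" "\<lambda>_. 1" \<beta>]) simp_all
  next
    case False
    \<comment> \<open>\<open>b\<^sub>l \<noteq> 0\<close> and \<open>det(b\<^sub>l, b\<^sub>k) = 0\<close>: \<open>b\<^sub>k\<close> is a rational multiple of \<open>b\<^sub>l\<close>, read off a nonzero entry\<close>
    define \<alpha> where "\<alpha> m = (if m = l then (if fst (B l) = 0 then snd (B k) else fst (B k))
                             else - (if fst (B l) = 0 then snd (B l) else fst (B l)))" for m
    show False
    proof (rule row_relation_not_integral_on[of "{l, k}" \<alpha> \<beta>])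
      show "\<exists>m\<in>{l, k}. \<alpha> m \<noteq> 0"
        using False assms(1) by (auto simp: \<alpha>_def prod_eq_iff)
      show "(\<Sum>m\<in>{l, k}. \<alpha> m * fst (B m)) = 0" "(\<Sum>m\<in>{l, k}. \<alpha> m * snd (B m)) = 0"
        using det assms(1) False by (auto simp: \<alpha>_def det2_def prod_eq_iff algebra_simps)
    qed (use assms in auto)
  qed
qed

lemma at_most_two_integral_rows:
  assumes "i \<noteq> j" "t i \<beta> \<in> \<int>" "t j \<beta> \<in> \<int>" "t l \<beta> \<in> \<int>"
  shows "l = i \<or> l = j"
proof (rule ccontr)
  assume "\<not> (l = i \<or> l = j)"
  moreover have "det2 (B i) (B j) \<noteq> 0"
    using assms integral_rows_independent by blast
  \<comment> \<open>the cofactor relation \<open>det(b\<^sub>j, b\<^sub>l) b\<^sub>i + det(b\<^sub>l, b\<^sub>i) b\<^sub>j + det(b\<^sub>i, b\<^sub>j) b\<^sub>l = 0\<close>\<close>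
  ultimately show False
    using assms
    by (intro row_relation_not_integral_on[of "{i, j, l}"
          "\<lambda>x. if x = i then det2 (B j) (B l) else if x = j then det2 (B l) (B i) else det2 (B i) (B j)" \<beta>])
       (auto simp: det2_def algebra_simps)
qed

lemma solution_support_opposite_pair:
  assumes "a \<in> horn_puiseux_solutions B c" and "a \<beta> \<noteq> 0"
  obtains i j where "i < j" "det2 (B i) (B j) \<noteq> 0" "opposite_open_quadrants (B i) (B j)"
    "t i \<beta> \<in> \<int>" "t j \<beta> \<in> \<int>"
proof -
  obtain l1 l2 l3 l4 where
    l: "entry (B l1) 1 > 0" "entry (B l2) 1 < 0" "entry (B l3) 2 > 0" "entry (B l4) 2 < 0"
    and int: "\<forall>l\<in>{l1, l2, l3, l4}. t l \<beta> \<in> \<int>"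
    using horn_solution_support_integral_rows[OF assms] by blast
  have "l1 \<noteq> l2" "l3 \<noteq> l4"
    using l by auto
  then have "l3 = l1 \<or> l3 = l2" "l4 = l1 \<or> l4 = l2"
    using at_most_two_integral_rows[OF \<open>l1 \<noteq> l2\<close>, where \<beta>=\<beta>] int by blast+
  then have "opposite_open_quadrants (B l1) (B l2)" "opposite_open_quadrants (B l2) (B l1)"
    using l \<open>l3 \<noteq> l4\<close> by (auto simp: opposite_open_quadrants_def entry_def sgn_if)
  moreover have "det2 (B l1) (B l2) \<noteq> 0" "det2 (B l2) (B l1) \<noteq> 0"
    using integral_rows_independent[where \<beta>=\<beta>] \<open>l1 \<noteq> l2\<close> int by simp_all
  ultimately show thesis
    using that int \<open>l1 \<noteq> l2\<close> by (metis insert_iff neqE)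
qed

end

definition nonneg_quadrant :: "(int \<times> int) set" where
  "nonneg_quadrant = {z. 0 \<le> fst z \<and> 0 \<le> snd z}"

lemma mem_nonneg_quadrant [simp]: "z \<in> nonneg_quadrant \<longleftrightarrow> 0 \<le> fst z \<and> 0 \<le> snd z"
  by (simp add: nonneg_quadrant_def)

lemma of_int_eq_of_nat_below_iff:
  "(\<exists>m < nat e. (of_int x :: 'a::ring_char_0) = of_nat m) \<longleftrightarrow> 0 \<le> x \<and> x < e"
proof
  assume "\<exists>m < nat e. (of_int x :: 'a) = of_nat m"
  then obtain m where "m < nat e" "x = int m"
    by (metis of_int_eq_iff of_int_of_nat_eq)
  then show "0 \<le> x \<and> x < e"
    by linarith
next
  assume "0 \<le> x \<and> x < e"
  then show "\<exists>m < nat e. (of_int x :: 'a) = of_nat m"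
    by (intro exI[of _ "nat x"]) simp
qed

lemma cramer_2x2:
  fixes x1 x2 y1 y2 u v :: "'a::field"
  assumes "x1 * y2 - x2 * y1 \<noteq> 0"
  shows "x1 * ((y2 * u - x2 * v) / (x1 * y2 - x2 * y1)) + x2 * ((x1 * v - y1 * u) / (x1 * y2 - x2 * y1)) = u"
    "y1 * ((y2 * u - x2 * v) / (x1 * y2 - x2 * y1)) + y2 * ((x1 * v - y1 * u) / (x1 * y2 - x2 * y1)) = v"
  using assms by (simp_all add: divide_simps) algebra+

text \<open>For two rows \<open>i, j\<close> that are integral at \<open>\<beta>\<close>, the lattice \<open>\<beta> + \<int>\<^sup>2\<close> is parametrised by the
  values \<open>z = (b\<^sub>i\<cdot>\<beta> + c\<^sub>i, b\<^sub>j\<cdot>\<beta> + c\<^sub>j) \<in> \<int>\<^sup>2\<close>; in these coordinates \<open>y\<^sub>k\<close> acts as translation by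
  \<open>shift k\<close>, and \<open>Q\<^sub>k, P\<^sub>k\<close> vanish exactly where a coordinate of \<open>z\<close> changes sign.\<close>

locale independent_pair = generic_params +
  fixes i j
  assumes distinct_rows: "i \<noteq> j" and det_nonzero: "det2 (B i) (B j) \<noteq> 0"
begin

definition exponent_of :: "int \<times> int \<Rightarrow> complex \<times> complex" where
  "exponent_of z =
    (let x1 = of_int (fst (B i)); x2 = of_int (snd (B i)); y1 = of_int (fst (B j)); y2 = of_int (snd (B j));
         D = x1 * y2 - x2 * y1; u = of_int (fst z) - c $ i; v = of_int (snd z) - c $ j
     in ((y2 * u - x2 * v) / D, (x1 * v - y1 * u) / D))"

definition shift :: "nat \<Rightarrow> int \<times> int" where
  "shift k = (entry (B i) k, entry (B j) k)"

lemma det_nonzero_complex: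
  "(of_int (fst (B i)) * of_int (snd (B j)) - of_int (snd (B i)) * of_int (fst (B j)) :: complex) \<noteq> 0"
  using det_nonzero by (simp add: det2_def flip: of_int_mult of_int_diff)

lemma row_form_exponent_of [simp]:
  "t i (exponent_of z) = of_int (fst z)" "t j (exponent_of z) = of_int (snd z)"
  using cramer_2x2[OF det_nonzero_complex, of "of_int (fst z) - c $ i" "of_int (snd z) - c $ j"]
  by (simp_all add: exponent_of_def Let_def row_form_def bdot_def)

lemma row_forms_determine_exponent:
  assumes "t i \<beta> = t i \<beta>'" "t j \<beta> = t j \<beta>'"
  shows "\<beta> = \<beta>'"
proof -
  define x1 x2 y1 y2 where "x1 = (of_int (fst (B i)) :: complex)" "x2 = (of_int (snd (B i)) :: complex)"
    "y1 = (of_int (fst (B j)) :: complex)" "y2 = (of_int (snd (B j)) :: complex)"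
  define X Y where "X = fst \<beta> - fst \<beta>'" "Y = snd \<beta> - snd \<beta>'"
  have eqs: "x1 * X + x2 * Y = 0" "y1 * X + y2 * Y = 0"
    using assms by (simp_all add: X_Y_def x1_x2_y1_y2_def row_form_def bdot_def algebra_simps)
  have "(x1 * y2 - x2 * y1) * X = y2 * (x1 * X + x2 * Y) - x2 * (y1 * X + y2 * Y)"
    "(x1 * y2 - x2 * y1) * Y = x1 * (y1 * X + y2 * Y) - y1 * (x1 * X + x2 * Y)"
    by (simp_all add: algebra_simps)
  then have "(x1 * y2 - x2 * y1) * X = 0" "(x1 * y2 - x2 * y1) * Y = 0"
    by (simp_all only: eqs mult_zero_right diff_self)
  moreover have "x1 * y2 - x2 * y1 \<noteq> 0"
    using det_nonzero_complex by (simp add: x1_x2_y1_y2_def)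
  ultimately have "X = 0" "Y = 0"
    by simp_all
  then show ?thesis
    by (simp add: X_Y_def prod_eq_iff)
qed

lemma inj_exponent_of: "inj exponent_of"
  by (rule injI) (metis row_form_exponent_of of_int_eq_iff prod_eq_iff)

lemma exponent_of_surj:
  assumes "t i \<beta> \<in> \<int>" "t j \<beta> \<in> \<int>"
  obtains z where "\<beta> = exponent_of z"
proof -
  obtain u v where "t i \<beta> = of_int u" "t j \<beta> = of_int v"
    using assms by (auto elim!: Ints_cases)
  then have "\<beta> = exponent_of (u, v)"
    by (intro row_forms_determine_exponent) simp_all
  then show thesis
    using that by blast
qed

lemma exponent_of_add_shift: "exponent_of (z + shift k) = exponent_of z + unitexp k"
  by (rule row_forms_determine_exponent) (simp_all add: row_form_add bdot_unitexp shift_def)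

lemma integral_rows_at_exponent: "t l (exponent_of z) \<in> \<int> \<longleftrightarrow> l = i \<or> l = j"
  using at_most_two_integral_rows[OF distinct_rows, where \<beta>="exponent_of z"] by auto

lemma Qsym_exponent_of_eq_0_iff:
  "Qsym B c k (exponent_of (z + shift k)) = 0 \<longleftrightarrow>
     (fst z < 0 \<and> 0 \<le> fst (z + shift k)) \<or> (snd z < 0 \<and> 0 \<le> snd (z + shift k))"
proof -
  have "Qsym B c k (exponent_of (z + shift k)) = 0 \<longleftrightarrow>
     (\<exists>l\<in>{i, j}. entry (B l) k > 0 \<and>
        (\<exists>m < nat (entry (B l) k). t l (exponent_of (z + shift k)) = of_nat m))"
    unfolding Qsym_eq_0_iff using integral_rows_at_exponent by (metis Ints_of_nat insertI1 insertCI)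
  also have "\<dots> \<longleftrightarrow> (entry (B i) k > 0 \<and> 0 \<le> fst (z + shift k) \<and> fst (z + shift k) < entry (B i) k) \<or>
                 (entry (B j) k > 0 \<and> 0 \<le> snd (z + shift k) \<and> snd (z + shift k) < entry (B j) k)"
    by (simp add: of_int_eq_of_nat_below_iff del: fst_add snd_add)
  finally show ?thesis
    by (auto simp: shift_def)
qed

lemma Psym_exponent_of_eq_0_iff:
  "Psym B c k (exponent_of z) = 0 \<longleftrightarrow>
     (0 \<le> fst z \<and> fst (z + shift k) < 0) \<or> (0 \<le> snd z \<and> snd (z + shift k) < 0)"
proof -
  have "Psym B c k (exponent_of z) = 0 \<longleftrightarrow>
     (\<exists>l\<in>{i, j}. entry (B l) k < 0 \<and> (\<exists>m < nat \<bar>entry (B l) k\<bar>. t l (exponent_of z) = of_nat m))"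
    unfolding Psym_eq_0_iff using integral_rows_at_exponent by (metis Ints_of_nat insertI1 insertCI)
  also have "\<dots> \<longleftrightarrow> (entry (B i) k < 0 \<and> 0 \<le> fst z \<and> fst z < \<bar>entry (B i) k\<bar>) \<or>
                 (entry (B j) k < 0 \<and> 0 \<le> snd z \<and> snd z < \<bar>entry (B j) k\<bar>)"
    by (simp add: of_int_eq_of_nat_below_iff)
  finally show ?thesis
    by (auto simp: shift_def)
qed

lemma solution_recurrence_shift:
  assumes "a \<in> horn_puiseux_solutions B c" "k = 1 \<or> k = 2"
  shows "Qsym B c k (exponent_of (z + shift k)) * a (exponent_of (z + shift k)) =
         Psym B c k (exponent_of z) * a (exponent_of z)"
  using horn_solution_recurrence[OF assms, of "exponent_of (z + shift k)"]
  by (simp add: exponent_of_add_shift)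

lemma gamma_coeff_recurrence_shift:
  "Qsym B c k (exponent_of (z + shift k)) * gamma_coeff B c (exponent_of (z + shift k)) =
   Psym B c k (exponent_of z) * gamma_coeff B c (exponent_of z)"
  using gamma_coeff_recurrence[of B c k "exponent_of (z + shift k)"]
  by (simp add: exponent_of_add_shift)

lemma gamma_coeff_nonzero:
  assumes "z \<in> nonneg_quadrant"
  shows "gamma_coeff B c (exponent_of z) \<noteq> 0"
proof -
  have "t l (exponent_of z) + 1 \<notin> \<int>\<^sub>\<le>\<^sub>0" for l
  proof
    assume "t l (exponent_of z) + 1 \<in> \<int>\<^sub>\<le>\<^sub>0"
    then obtain n where n: "t l (exponent_of z) = of_int (- int n - 1)"
      by (auto elim!: nonpos_Ints_cases' simp: algebra_simps)
    then have "l = i \<or> l = j"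
      using integral_rows_at_exponent by (metis Ints_of_int)
    then show False
      using n assms by (auto simp del: of_int_diff of_int_minus)
  qed
  then show ?thesis
    by (simp add: gamma_coeff_def rGamma_eq_zero_iff)
qed

text \<open>The support of a solution can only end where \<open>P\<^sub>k\<close> or \<open>Q\<^sub>k\<close> vanishes, i.e. where a
  step enters the region where some coordinate is negative.\<close>

lemma solution_support_propagates:
  assumes sol: "a \<in> horn_puiseux_solutions B c" and k: "k = 1 \<or> k = 2"
    and d: "d = shift k \<or> d = - shift k"
    and "fst (z + d) < 0 \<longrightarrow> fst z < 0" "snd (z + d) < 0 \<longrightarrow> snd z < 0"
    and nz: "a (exponent_of z) \<noteq> 0"
  shows "a (exponent_of (z + d)) \<noteq> 0"
  using d
proof
  assume "d = shift k"
  then have "Psym B c k (exponent_of z) \<noteq> 0"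
    using assms(4,5) by (auto simp: Psym_exponent_of_eq_0_iff)
  then show ?thesis
    using solution_recurrence_shift[OF sol k, of z] nz \<open>d = shift k\<close> by auto
next
  assume "d = - shift k"
  then have z: "(z + d) + shift k = z"
    by simp
  have "Qsym B c k (exponent_of ((z + d) + shift k)) \<noteq> 0"
    unfolding Qsym_exponent_of_eq_0_iff using assms(4,5) by (auto simp: \<open>d = - shift k\<close>)
  then show ?thesis
    using solution_recurrence_shift[OF sol k, of "z + d"] nz z by auto
qed

lemma solution_gamma_ratio_shift:
  assumes sol: "a \<in> horn_puiseux_solutions B c" and k: "k = 1 \<or> k = 2"
    and "z \<in> nonneg_quadrant"
  shows "a (exponent_of z) * gamma_coeff B c (exponent_of (z + shift k)) =
         a (exponent_of (z + shift k)) * gamma_coeff B c (exponent_of z)"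
proof -
  define Q P where "Q = Qsym B c k (exponent_of (z + shift k))" "P = Psym B c k (exponent_of z)"
  define a0 a1 g0 g1 where "a0 = a (exponent_of z)" "a1 = a (exponent_of (z + shift k))"
    "g0 = gamma_coeff B c (exponent_of z)" "g1 = gamma_coeff B c (exponent_of (z + shift k))"
  have "Q \<noteq> 0"
    using assms(3) by (auto simp: Q_P_def Qsym_exponent_of_eq_0_iff)
  have "Q * a1 = P * a0" "Q * g1 = P * g0"
    using solution_recurrence_shift[OF sol k] gamma_coeff_recurrence_shift
    by (simp_all add: Q_P_def a0_a1_g0_g1_def)
  then have "Q * (a0 * g1) = Q * (a1 * g0)"
    by (metis mult.assoc mult.left_commute)
  with \<open>Q \<noteq> 0\<close> show ?thesis
    by (simp add: a0_a1_g0_g1_def)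
qed

text \<open>Restricting the \<open>\<Gamma>\<close>-series to any union \<open>C\<close> of components of the graph on the
  nonnegative quadrant with edges \<open>\<plusminus>shift k\<close> gives a solution: at the boundary of the
  quadrant the vanishing of \<open>Q\<^sub>k\<close> or \<open>P\<^sub>k\<close> cuts the recurrence.\<close>

definition gamma_on :: "(int \<times> int) set \<Rightarrow> puiseux" where
  "gamma_on C \<beta> = (if \<beta> \<in> exponent_of ` C then gamma_coeff B c \<beta> else 0)"

lemma gamma_on_exponent_of:
  "gamma_on C (exponent_of z) = (if z \<in> C then gamma_coeff B c (exponent_of z) else 0)"
  using inj_exponent_of unfolding gamma_on_def by (auto dest: injD)

lemma Hop_exponent_of_add_shift:
  "Hop B c k f (exponent_of (x + shift k)) =
     Qsym B c k (exponent_of (x + shift k)) * f (exponent_of (x + shift k)) -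
     Psym B c k (exponent_of x) * f (exponent_of x)"
  by (simp add: Hop_def exponent_of_add_shift)

lemma Hop_off_lattice:
  assumes "\<beta> \<notin> range exponent_of" "\<And>\<beta>. \<beta> \<notin> range exponent_of \<Longrightarrow> f \<beta> = 0"
  shows "Hop B c k f \<beta> = 0"
proof -
  have "\<beta> - unitexp k \<notin> range exponent_of"
  proof
    assume "\<beta> - unitexp k \<in> range exponent_of"
    then obtain z where "\<beta> - unitexp k = exponent_of z"
      by blast
    then have "\<beta> = exponent_of (z + shift k)"
      by (simp add: exponent_of_add_shift diff_eq_eq)
    with assms(1) show False
      by blast
  qed
  with assms show ?thesis
    by (simp add: Hop_def)
qed

lemma Hop_gamma_on:
  assumes C: "C \<subseteq> nonneg_quadrant"
    and closed: "\<And>x. x \<in> nonneg_quadrant \<Longrightarrow> x + shift k \<in> nonneg_quadrant \<Longrightarrow>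
                      x \<in> C \<longleftrightarrow> x + shift k \<in> C"
  shows "Hop B c k (gamma_on C) = 0"
proof
  fix \<beta>
  show "Hop B c k (gamma_on C) \<beta> = 0 \<beta>"
  proof (cases "\<beta> \<in> range exponent_of")
    case True
    then obtain x where \<beta>: "\<beta> = exponent_of (x + shift k)"
      by (metis diff_add_cancel imageE)
    consider "x \<in> C" "x + shift k \<in> C" | "x \<in> C" "x + shift k \<notin> nonneg_quadrant"
      | "x \<notin> nonneg_quadrant" "x + shift k \<in> C" | "x \<notin> C" "x + shift k \<notin> C"
      using C closed by blast
    then show ?thesis
    proof cases
      case 1
      then show ?thesis
        using gamma_coeff_recurrence_shift[of k x]
        by (simp add: \<beta> Hop_exponent_of_add_shift gamma_on_exponent_of)
    next
      case 2
      then have "Psym B c k (exponent_of x) = 0"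
        using C by (auto simp: Psym_exponent_of_eq_0_iff)
      then show ?thesis
        using 2 C by (auto simp: \<beta> Hop_exponent_of_add_shift gamma_on_exponent_of)
    next
      case 3
      then have "Qsym B c k (exponent_of (x + shift k)) = 0"
        using C by (auto simp: Qsym_exponent_of_eq_0_iff)
      then show ?thesis
        using 3 C by (auto simp: \<beta> Hop_exponent_of_add_shift gamma_on_exponent_of)
    next
      case 4
      then show ?thesis
        by (simp add: \<beta> Hop_exponent_of_add_shift gamma_on_exponent_of)
    qed
  next
    case False
    have "gamma_on C \<beta>' = 0" if "\<beta>' \<notin> range exponent_of" for \<beta>'
      using that by (auto simp: gamma_on_def)
    with False show ?thesis
      using Hop_off_lattice by simp
  qed
qed

lemma gamma_on_solution:
  assumes "finite C" "C \<subseteq> nonneg_quadrant"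
    and "\<And>x k. k = 1 \<or> k = 2 \<Longrightarrow> x \<in> nonneg_quadrant \<Longrightarrow> x + shift k \<in> nonneg_quadrant \<Longrightarrow>
                  x \<in> C \<longleftrightarrow> x + shift k \<in> C"
  shows "gamma_on C \<in> horn_puiseux_solutions B c"
proof -
  have "{\<alpha>. gamma_on C \<alpha> \<noteq> 0} \<subseteq> exponent_of ` C"
    by (auto simp: gamma_on_def split: if_splits)
  then have "finite {\<alpha>. gamma_on C \<alpha> \<noteq> 0}"
    using assms(1) finite_subset by blast
  then show ?thesis
    using Hop_gamma_on[OF assms(2,3)]
    by (simp add: horn_puiseux_solutions_def is_puiseux_poly_def)
qed

lemma shift_nonzero: "k = 1 \<or> k = 2 \<Longrightarrow> shift k \<noteq> 0"
  using det_nonzero by (auto simp: shift_def entry_def det2_def zero_prod_def)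

lemma solution_support_leaves_ray:
  assumes sol: "a \<in> horn_puiseux_solutions B c" and "e \<noteq> 0"
  shows "\<exists>m::nat. a (exponent_of (z + (int m * fst e, int m * snd e))) = 0"
proof (rule ccontr)
  define ray where "ray m = z + (int m * fst e, int m * snd e)" for m :: nat
  assume "\<not> ?thesis"
  then have "range (exponent_of \<circ> ray) \<subseteq> {\<alpha>. a \<alpha> \<noteq> 0}"
    by (auto simp: ray_def)
  moreover have "inj ray"
  proof (rule injI)
    fix m m' assume "ray m = ray m'"
    then have "int m * fst e = int m' * fst e" "int m * snd e = int m' * snd e"
      by (simp_all add: ray_def prod_eq_iff)
    then show "m = m'"
      using \<open>e \<noteq> 0\<close> by (cases e) (auto simp: zero_prod_def)
  qed
  then have "inj (exponent_of \<circ> ray)"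
    using inj_compose inj_exponent_of by blast
  ultimately show False
    using horn_solution_finite_support[OF sol] finite_subset range_inj_infinite by blast
qed

lemma solution_vanishes_of_nonentering_ray:
  assumes sol: "a \<in> horn_puiseux_solutions B c" and k: "k = 1 \<or> k = 2"
    and e: "e = shift k \<or> e = - shift k"
    and "0 \<le> fst e \<or> fst z < 0 \<and> fst e \<le> 0" "0 \<le> snd e \<or> snd z < 0 \<and> snd e \<le> 0"
  shows "a (exponent_of z) = 0"
proof (rule ccontr)
  assume nz: "a (exponent_of z) \<noteq> 0"
  define ray where "ray m = z + (int m * fst e, int m * snd e)" for m :: nat
  have ray_Suc: "ray (Suc m) = ray m + e" for m
    by (simp add: ray_def prod_eq_iff algebra_simps)
  have nonentering: "x + int m * d + d < 0 \<longrightarrow> x + int m * d < 0" if "0 \<le> d \<or> x < 0 \<and> d \<le> 0"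
    for x d :: int and m
    using that mult_nonneg_nonpos[of "int m" d] by auto
  have "fst (ray m + e) < 0 \<longrightarrow> fst (ray m) < 0" "snd (ray m + e) < 0 \<longrightarrow> snd (ray m) < 0" for m
    using nonentering assms(4,5) by (simp_all add: ray_def)
  then have ray_support: "a (exponent_of (ray m)) \<noteq> 0" for m
  proof (induction m)
    case 0
    then show ?case
      using nz by (simp add: ray_def flip: zero_prod_def)
  next
    case (Suc m)
    then show ?case
      unfolding ray_Suc using solution_support_propagates[OF sol k e] by blast
  qed
  have "e \<noteq> 0"
    using e shift_nonzero[OF k] by auto
  then obtain m where "a (exponent_of (ray m)) = 0"
    using solution_support_leaves_ray[OF sol, of e z] unfolding ray_def by blast
  with ray_support show False
    by blast
qed

end

text \<open>The components of the graph on the nonnegative quadrant with edges \<open>\<plusminus>u, \<plusminus>v\<close>, for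
  \<open>u = (u\<^sub>1, -u\<^sub>2)\<close> and \<open>v = (v\<^sub>1, -v\<^sub>2)\<close> with positive entries, are counted by orienting the
  edges as \<open>z \<rightarrow> z + v\<close> and \<open>z \<rightarrow> z - u\<close>: if \<open>u\<^sub>1 v\<^sub>2 < v\<^sub>1 u\<^sub>2\<close> both steps increase the
  potential \<open>(u\<^sub>2 + v\<^sub>2) z\<^sub>1 + (u\<^sub>1 + v\<^sub>1) z\<^sub>2\<close>, the system is locally confluent, and each
  component contains exactly one normal form, a point of \<open>[0, u\<^sub>1) \<times> [0, v\<^sub>2)\<close>.\<close>

locale quadrant_rewriting =
  fixes u1 u2 v1 v2 :: int
  assumes pos: "u1 > 0" "u2 > 0" "v1 > 0" "v2 > 0" and slope: "u1 * v2 < v1 * u2"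
begin

definition step :: "int \<times> int \<Rightarrow> int \<times> int \<Rightarrow> bool" where
  "step z z' \<longleftrightarrow> z \<in> nonneg_quadrant \<and> z' \<in> nonneg_quadrant \<and> (z' = z + (v1, - v2) \<or> z' = z - (u1, - u2))"

definition normal :: "int \<times> int \<Rightarrow> bool" where
  "normal z \<longleftrightarrow> z \<in> nonneg_quadrant \<and> (\<forall>z'. \<not> step z z')"

lemma normal_iff: "normal z \<longleftrightarrow> 0 \<le> fst z \<and> fst z < u1 \<and> 0 \<le> snd z \<and> snd z < v2"
proof (cases "z \<in> nonneg_quadrant")
  case True
  then have "step z (z - (u1, - u2)) \<longleftrightarrow> u1 \<le> fst z" "step z (z + (v1, - v2)) \<longleftrightarrow> v2 \<le> snd z"
    using pos by (auto simp: step_def)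
  moreover have "(\<forall>z'. \<not> step z z') \<longleftrightarrow> \<not> step z (z - (u1, - u2)) \<and> \<not> step z (z + (v1, - v2))"
    by (metis step_def)
  ultimately show ?thesis
    using True by (auto simp: normal_def)
qed (auto simp: normal_def)

lemma card_normal: "card {z. normal z} = nat u1 * nat v2"
proof -
  have "{z. normal z} = {0..<u1} \<times> {0..<v2}"
    by (auto simp: normal_iff)
  then show ?thesis
    by (simp add: card_cartesian_product)
qed

lemma finite_normal: "finite {z. normal z}"
  using card_normal pos by (intro card_ge_0_finite) simp

lemma local_confluence:
  assumes "step z x" "step z y" "x \<noteq> y"
  shows "\<exists>w. step x w \<and> step y w"
proof -
  have "step x (z + (v1, - v2) - (u1, - u2)) \<and> step y (z + (v1, - v2) - (u1, - u2))"
    using assms pos by (auto simp: step_def)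
  then show ?thesis
    by blast
qed

definition potential :: "int \<times> int \<Rightarrow> int" where
  "potential z = (u2 + v2) * fst z + (u1 + v1) * snd z"

lemma potential_step: "step z z' \<Longrightarrow> potential z < potential z'"
  using slope by (auto simp: step_def potential_def algebra_simps)

lemma potential_steps: "step\<^sup>*\<^sup>* z P \<Longrightarrow> potential z \<le> potential P"
  by (induction rule: rtranclp_induct) (auto dest: potential_step)

lemma normal_steps: "step\<^sup>*\<^sup>* z P \<Longrightarrow> normal z \<Longrightarrow> z = P"
  by (induction rule: converse_rtranclp_induct) (auto simp: normal_def)

lemma steps_to_normal_after_step:
  assumes "step\<^sup>*\<^sup>* z P" "normal P" "step z x"
  shows "step\<^sup>*\<^sup>* x P"
  using assms
proof (induction arbitrary: x rule: converse_rtranclp_induct)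
  case base
  then show ?case
    by (metis normal_def)
next
  case (step z y)
  show ?case
  proof (cases "x = y")
    case False
    then obtain w where "step x w" "step y w"
      using local_confluence[OF step.prems(2) step.hyps(1)] by blast
    then show ?thesis
      using step.IH[OF step.prems(1)] by (meson converse_rtranclp_into_rtranclp)
  qed (use step in simp)
qed

lemma unique_normal_form:
  assumes "step\<^sup>*\<^sup>* z P" "step\<^sup>*\<^sup>* z P'" "normal P" "normal P'"
  shows "P = P'"
  using assms(2,1,3,4)
proof (induction rule: converse_rtranclp_induct)
  case base
  then show ?case
    using normal_steps by blast
next
  case (step z y)
  then show ?case
    using steps_to_normal_after_step by blast
qed

lemma step_preserves_normal_form:
  assumes "step z z'" "normal P"
  shows "step\<^sup>*\<^sup>* z P \<longleftrightarrow> step\<^sup>*\<^sup>* z' P"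
  using steps_to_normal_after_step[OF _ assms(2,1)] assms(1)
  by (meson converse_rtranclp_into_rtranclp)

lemma finite_steps_to: "finite {z \<in> nonneg_quadrant. step\<^sup>*\<^sup>* z P}"
proof (rule finite_subset)
  show "{z \<in> nonneg_quadrant. step\<^sup>*\<^sup>* z P} \<subseteq> {0..potential P} \<times> {0..potential P}"
  proof
    fix z assume z: "z \<in> {z \<in> nonneg_quadrant. step\<^sup>*\<^sup>* z P}"
    then have "fst z \<le> (u2 + v2) * fst z" "snd z \<le> (u1 + v1) * snd z"
      using pos by (simp_all add: mult_le_cancel_right1)
    then show "z \<in> {0..potential P} \<times> {0..potential P}"
      using potential_steps[of z P] z pos by (auto simp: potential_def mem_Times_iff)
  qed
qed simp

lemma steps_to_normal:
  assumes "finite S" "z \<in> S" "\<And>x y. x \<in> S \<Longrightarrow> step x y \<Longrightarrow> y \<in> S" "z \<in> nonneg_quadrant"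
  obtains P where "normal P" "step\<^sup>*\<^sup>* z P"
proof -
  define K where "K = Max (potential ` S)"
  have "\<exists>P. normal P \<and> step\<^sup>*\<^sup>* z P" if "z \<in> S" "z \<in> nonneg_quadrant" "nat (K - potential z) = n" for z n
    using that
  proof (induction n arbitrary: z rule: less_induct)
    case (less n)
    show ?case
    proof (cases "normal z")
      case False
      then obtain z' where z': "step z z'"
        using less.prems(2) by (auto simp: normal_def)
      have "z' \<in> S" "z' \<in> nonneg_quadrant"
        using assms(3)[OF less.prems(1) z'] z' by (auto simp: step_def)
      have "potential z' \<le> K"
        unfolding K_def using assms(1) \<open>z' \<in> S\<close> by simp
      then have "nat (K - potential z') < n"
        using potential_step[OF z'] less.prems(3) by linarith
      then obtain P where "normal P" "step\<^sup>*\<^sup>* z' P"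
        using less.IH \<open>z' \<in> S\<close> \<open>z' \<in> nonneg_quadrant\<close> by blast
      then show ?thesis
        using z' by (meson converse_rtranclp_into_rtranclp)
    qed blast
  qed
  then show thesis
    using assms(2,4) that by blast
qed

end

locale opposite_pair = independent_pair +
  assumes opposite: "opposite_open_quadrants (B i) (B j)"
begin

abbreviation p :: "nat \<Rightarrow> int" where "p k \<equiv> \<bar>entry (B i) k\<bar>"
abbreviation r :: "nat \<Rightarrow> int" where "r k \<equiv> \<bar>entry (B j) k\<bar>"

lemma entries_opposite:
  assumes "k = 1 \<or> k = 2"
  shows "entry (B i) k \<noteq> 0" "sgn (entry (B j) k) = - sgn (entry (B i) k)"
  using opposite assms by (auto simp: opposite_open_quadrants_def entry_def)

definition step_dir :: "nat \<Rightarrow> int \<times> int" where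
  "step_dir k = (if entry (B i) k > 0 then shift k else - shift k)"

lemma step_dir_eq:
  assumes "k = 1 \<or> k = 2"
  shows "step_dir k = (p k, - r k)" "p k > 0" "r k > 0"
  using entries_opposite[OF assms]
  by (auto simp: step_dir_def shift_def sgn_if abs_if split: if_splits)

lemma cross_products_differ: "p 1 * r 2 \<noteq> p 2 * r 1"
proof
  assume eq: "p 1 * r 2 = p 2 * r 1"
  have "det2 (B i) (B j) = sgn (entry (B i) 1) * sgn (entry (B i) 2) * (p 2 * r 1 - p 1 * r 2)"
    using entries_opposite[of 1] entries_opposite[of 2]
    by (simp add: det2_def entry_def abs_if sgn_if algebra_simps split: if_splits)
  then show False
    using eq det_nonzero by simp
qed

definition u_index :: nat where "u_index = (if p 1 * r 2 < p 2 * r 1 then 1 else 2)"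
definition v_index :: nat where "v_index = (if p 1 * r 2 < p 2 * r 1 then 2 else 1)"

lemma index_cases: "u_index = 1 \<or> u_index = 2" "v_index = 1 \<or> v_index = 2" "u_index \<noteq> v_index"
  by (simp_all add: u_index_def v_index_def)

sublocale R: quadrant_rewriting "p u_index" "r u_index" "p v_index" "r v_index"
proof
  show "p u_index > 0" "r u_index > 0" "p v_index > 0" "r v_index > 0"
    using step_dir_eq(2,3)[OF index_cases(1)] step_dir_eq(2,3)[OF index_cases(2)] by simp_all
  show "p u_index * r v_index < p v_index * r u_index"
    using cross_products_differ by (auto simp: u_index_def v_index_def)
qed

definition normal_points :: "(int \<times> int) set" where
  "normal_points = {P. R.normal P}"

lemma finite_normal_points: "finite normal_points"
  by (simp add: normal_points_def R.finite_normal)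

lemma card_normal_points: "card normal_points = nu (B i) (B j)"
proof -
  have card: "card normal_points = nat (p u_index * r v_index)"
    using R.card_normal by (simp add: normal_points_def nat_mult_distrib)
  have nu: "nu (B i) (B j) = min (nat (p 1 * r 2)) (nat (r 1 * p 2))"
    by (simp add: nu_def entry_def abs_mult)
  show ?thesis
  proof (cases "p 1 * r 2 < p 2 * r 1")
    case True
    then show ?thesis
      unfolding card nu mult.commute[of "r 1" "p 2"]
      by (simp add: u_index_def v_index_def min_absorb1 nat_mono)
  next
    case False
    then have "p 2 * r 1 < p 1 * r 2"
      using cross_products_differ by linarith
    then show ?thesis
      unfolding card nu mult.commute[of "r 1" "p 2"] using False
      by (simp add: u_index_def v_index_def min_absorb2 nat_mono)
  qed
qed

lemma step_iff_step_dir: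
  "R.step z z' \<longleftrightarrow> z \<in> nonneg_quadrant \<and> z' \<in> nonneg_quadrant \<and>
     (z' = z + step_dir v_index \<or> z' = z - step_dir u_index)"
  using step_dir_eq(1)[OF index_cases(1)] step_dir_eq(1)[OF index_cases(2)] by (simp only: R.step_def)

lemma step_dir_shift: "step_dir k = shift k \<or> step_dir k = - shift k"
  by (simp add: step_dir_def)

lemma shift_edge_is_step:
  assumes "k = 1 \<or> k = 2" "x \<in> nonneg_quadrant" "x + shift k \<in> nonneg_quadrant"
  shows "R.step x (x + shift k) \<or> R.step (x + shift k) x"
proof -
  have "k = u_index \<or> k = v_index"
    using assms(1) index_cases by auto
  moreover have "shift k = step_dir k \<or> shift k = - step_dir k"
    using step_dir_shift[of k] by auto
  ultimately have "x + shift k = x + step_dir v_index \<or> x + shift k = x - step_dir u_index \<or>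
                   x = (x + shift k) + step_dir v_index \<or> x = (x + shift k) - step_dir u_index"
    by (auto simp: algebra_simps)
  then show ?thesis
    using assms(2,3) by (auto simp: step_iff_step_dir simp del: mem_nonneg_quadrant)
qed

lemma step_is_shift_edge:
  assumes "R.step z z'"
  obtains k where "k = 1 \<or> k = 2" "z' = z + shift k \<or> z = z' + shift k"
proof -
  have "z' = z + step_dir v_index \<or> z' = z - step_dir u_index"
    using assms by (simp add: step_iff_step_dir)
  then have "z' = z + shift v_index \<or> z = z' + shift v_index \<or> z' = z + shift u_index \<or> z = z' + shift u_index"
    using step_dir_shift[of u_index] step_dir_shift[of v_index] by (auto simp: algebra_simps)
  then show thesis
    using that index_cases by blast
qed

definition component :: "int \<times> int \<Rightarrow> (int \<times> int) set" where
  "component P = {z \<in> nonneg_quadrant. R.step\<^sup>*\<^sup>* z P}"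

lemma normal_in_component: "R.normal P \<Longrightarrow> P \<in> component P"
  by (simp add: component_def R.normal_def)

lemma component_unique:
  "z \<in> component P \<Longrightarrow> z \<in> component P' \<Longrightarrow> R.normal P \<Longrightarrow> R.normal P' \<Longrightarrow> P = P'"
  unfolding component_def using R.unique_normal_form by blast

definition component_solution :: "int \<times> int \<Rightarrow> puiseux" where
  "component_solution P = gamma_on (component P)"

lemma component_solution_support:
  "component_solution P \<beta> \<noteq> 0 \<Longrightarrow> \<exists>z\<in>component P. \<beta> = exponent_of z"
  by (auto simp: component_solution_def gamma_on_def split: if_splits)

lemma component_solution_in_solutions:
  assumes "R.normal P"
  shows "component_solution P \<in> horn_puiseux_solutions B c"
  unfolding component_solution_def
proof (rule gamma_on_solution)
  show "finite (component P)"
    unfolding component_def by (rule R.finite_steps_to)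
  show "component P \<subseteq> nonneg_quadrant"
    by (auto simp: component_def)
  show "x \<in> component P \<longleftrightarrow> x + shift k \<in> component P"
    if "k = 1 \<or> k = 2" "x \<in> nonneg_quadrant" "x + shift k \<in> nonneg_quadrant" for x k
  proof -
    have "R.step\<^sup>*\<^sup>* x P \<longleftrightarrow> R.step\<^sup>*\<^sup>* (x + shift k) P"
      using shift_edge_is_step[OF that] R.step_preserves_normal_form[OF _ assms] by blast
    then show ?thesis
      using that(2,3) by (simp add: component_def del: mem_nonneg_quadrant)
  qed
qed

lemma component_solution_peak: "R.normal P \<Longrightarrow> component_solution P (exponent_of P) \<noteq> 0"
  using normal_in_component gamma_coeff_nonzero
  by (auto simp: component_solution_def gamma_on_exponent_of R.normal_def)

text \<open>Along \<open>\<plusminus>(p\<^sub>1, -r\<^sub>1)\<close>, chosen so that the negative coordinate decreases, no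
  coordinate ever turns negative; the support would then contain a whole ray.\<close>

lemma solution_support_in_quadrant:
  assumes sol: "a \<in> horn_puiseux_solutions B c" and nz: "a (exponent_of z) \<noteq> 0"
  shows "z \<in> nonneg_quadrant"
proof (rule ccontr)
  assume "z \<notin> nonneg_quadrant"
  have dir: "step_dir 1 = shift 1 \<or> step_dir 1 = - shift 1"
    by (rule step_dir_shift)
  have e: "step_dir 1 = (p 1, - r 1)" "p 1 > 0" "r 1 > 0"
    using step_dir_eq[of 1] by simp_all
  show False
  proof (cases "snd z < 0")
    case True
    then show False
      using solution_vanishes_of_nonentering_ray[OF sol _ dir] e nz by simp
  next
    case False
    then have "fst z < 0"
      using \<open>z \<notin> nonneg_quadrant\<close> by simp
    moreover have "- step_dir 1 = shift 1 \<or> - step_dir 1 = - shift 1"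
      using dir by auto
    ultimately show False
      using solution_vanishes_of_nonentering_ray[OF sol, of 1 "- step_dir 1"] e nz by simp
  qed
qed

lemma solution_support_step:
  assumes sol: "a \<in> horn_puiseux_solutions B c" and step: "R.step z z'" and nz: "a (exponent_of z) \<noteq> 0"
  shows "a (exponent_of z') \<noteq> 0"
proof -
  obtain k where k: "k = 1 \<or> k = 2" and edge: "z' = z + shift k \<or> z = z' + shift k"
    using step_is_shift_edge[OF step] by blast
  from edge obtain d where d: "d = shift k \<or> d = - shift k" and z': "z' = z + d"
  proof (elim disjE)
    assume "z = z' + shift k"
    then have "z' = z + - shift k"
      by simp
    then show thesis
      using that by blast
  qed blast
  have "z \<in> nonneg_quadrant" "z' \<in> nonneg_quadrant"
    using step by (simp_all add: R.step_def)
  then show ?thesis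
    using solution_support_propagates[OF sol k d _ _ nz] z' by simp
qed

lemma solution_gamma_ratio_step:
  assumes sol: "a \<in> horn_puiseux_solutions B c" and step: "R.step z z'"
  shows "a (exponent_of z) * gamma_coeff B c (exponent_of z') =
         a (exponent_of z') * gamma_coeff B c (exponent_of z)"
proof -
  obtain k where k: "k = 1 \<or> k = 2" and edge: "z' = z + shift k \<or> z = z' + shift k"
    using step_is_shift_edge[OF step] by blast
  have "z \<in> nonneg_quadrant" "z' \<in> nonneg_quadrant"
    using step by (simp_all add: R.step_def)
  with edge show ?thesis
  proof (elim disjE)
    assume "z = z' + shift k"
    then show ?thesis
      using solution_gamma_ratio_shift[OF sol k \<open>z' \<in> nonneg_quadrant\<close>] by (simp add: mult.commute)
  qed (use solution_gamma_ratio_shift[OF sol k] in simp)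
qed

lemma solution_on_component:
  assumes sol: "a \<in> horn_puiseux_solutions B c" and P: "R.normal P" and z: "z \<in> component P"
  shows "a (exponent_of z) =
         a (exponent_of P) / gamma_coeff B c (exponent_of P) * component_solution P (exponent_of z)"
proof -
  have "R.step\<^sup>*\<^sup>* z P"
    using z by (simp add: component_def)
  then have "a (exponent_of z) * gamma_coeff B c (exponent_of P) =
             a (exponent_of P) * gamma_coeff B c (exponent_of z)"
  proof (induction rule: converse_rtranclp_induct)
    case (step z y)
    define g where "g x = gamma_coeff B c (exponent_of x)" for x
    define f where "f x = a (exponent_of x)" for x
    have "g y \<noteq> 0"
      using step.hyps(1) gamma_coeff_nonzero by (simp add: g_def R.step_def)
    have "g y * (f z * g P) = (f z * g y) * g P"
      by (simp add: ac_simps)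
    also have "\<dots> = (f y * g P) * g z"
      using solution_gamma_ratio_step[OF sol step.hyps(1)] by (simp add: f_def g_def ac_simps)
    also have "\<dots> = g y * (f P * g z)"
      using step.IH by (simp add: f_def g_def ac_simps)
    finally show ?case
      using \<open>g y \<noteq> 0\<close> by (simp add: f_def g_def)
  qed simp
  moreover have "gamma_coeff B c (exponent_of P) \<noteq> 0"
    using P gamma_coeff_nonzero by (simp add: R.normal_def)
  ultimately show ?thesis
    using z by (simp add: component_solution_def gamma_on_exponent_of field_simps)
qed

lemma solution_support_in_component:
  assumes sol: "a \<in> horn_puiseux_solutions B c" and nz: "a (exponent_of z) \<noteq> 0"
  obtains P where "R.normal P" "z \<in> component P"
proof -
  have "finite {z. a (exponent_of z) \<noteq> 0}"
    using finite_vimageI[OF horn_solution_finite_support[OF sol] inj_exponent_of] by (simp add: vimage_def)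
  moreover have "z \<in> nonneg_quadrant"
    using solution_support_in_quadrant[OF sol nz] .
  moreover have "y \<in> {z. a (exponent_of z) \<noteq> 0}" if "x \<in> {z. a (exponent_of z) \<noteq> 0}" "R.step x y" for x y
    using solution_support_step[OF sol] that by blast
  ultimately obtain P where "R.normal P" "R.step\<^sup>*\<^sup>* z P"
    using R.steps_to_normal[of "{z. a (exponent_of z) \<noteq> 0}" z] nz by blast
  then show thesis
    using that \<open>z \<in> nonneg_quadrant\<close> by (simp add: component_def)
qed

end

context generic_params
begin

definition opposite_pairs :: "('r \<times> 'r) set" where
  "opposite_pairs =
     {(i, j). i < j \<and> det2 (B i) (B j) \<noteq> 0 \<and> opposite_open_quadrants (B i) (B j)}"

lemma opposite_pair_of:
  assumes "(i, j) \<in> opposite_pairs"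
  shows "opposite_pair B c i j"
proof -
  have "i \<noteq> j" "det2 (B i) (B j) \<noteq> 0" "opposite_open_quadrants (B i) (B j)"
    using assms by (auto simp: opposite_pairs_def)
  then show ?thesis
    by (simp add: opposite_pair_def opposite_pair_axioms_def independent_pair_def
        independent_pair_axioms_def generic_params_axioms)
qed

definition basis_index :: "(('r \<times> 'r) \<times> (int \<times> int)) set" where
  "basis_index = (SIGMA (i, j):opposite_pairs. opposite_pair.normal_points B i j)"

definition basis_solution :: "('r \<times> 'r) \<times> (int \<times> int) \<Rightarrow> puiseux" where
  "basis_solution = (\<lambda>((i, j), P). opposite_pair.component_solution B c i j P)"

definition basis_peak :: "('r \<times> 'r) \<times> (int \<times> int) \<Rightarrow> complex \<times> complex" where
  "basis_peak = (\<lambda>((i, j), P). independent_pair.exponent_of B c i j P)"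

lemma basis_index_cases:
  assumes "x \<in> basis_index"
  obtains i j P where "x = ((i, j), P)" "(i, j) \<in> opposite_pairs" "opposite_pair B c i j"
    "P \<in> opposite_pair.normal_points B i j"
  using assms opposite_pair_of by (auto simp: basis_index_def)

lemma finite_basis_index: "finite basis_index"
  unfolding basis_index_def
  by (rule finite_SigmaI) (auto intro: opposite_pair.finite_normal_points[OF opposite_pair_of])

lemma card_basis_index: "card basis_index = (\<Sum>(i, j)\<in>opposite_pairs. nu (B i) (B j))"
proof -
  have "card basis_index = (\<Sum>ij\<in>opposite_pairs. card ((\<lambda>(i, j). opposite_pair.normal_points B i j) ij))"
    unfolding basis_index_def
    by (rule card_SigmaI) (auto intro: opposite_pair.finite_normal_points[OF opposite_pair_of])
  also have "\<dots> = (\<Sum>(i, j)\<in>opposite_pairs. nu (B i) (B j))"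
    by (intro sum.cong) (auto simp: opposite_pair.card_normal_points[OF opposite_pair_of])
  finally show ?thesis .
qed

lemma basis_solution_in_solutions:
  "x \<in> basis_index \<Longrightarrow> basis_solution x \<in> horn_puiseux_solutions B c"
  by (elim basis_index_cases)
     (simp add: basis_solution_def opposite_pair.normal_points_def opposite_pair.component_solution_in_solutions)

lemma basis_solution_peak: "x \<in> basis_index \<Longrightarrow> basis_solution x (basis_peak x) \<noteq> 0"
  by (elim basis_index_cases)
     (simp add: basis_solution_def basis_peak_def opposite_pair.normal_points_def
      opposite_pair.component_solution_peak)

text \<open>A point in the support of a basis solution has exactly two integral rows, which
  recover the pair, and then its component recovers the normal point.\<close>

lemma basis_supports_disjoint:
  assumes x: "x \<in> basis_index" and y: "y \<in> basis_index"
    and "basis_solution x \<beta> \<noteq> 0" "basis_solution y \<beta> \<noteq> 0"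
  shows "x = y"
proof -
  obtain i j P where x': "x = ((i, j), P)" "(i, j) \<in> opposite_pairs" and ij: "opposite_pair B c i j"
    and P: "P \<in> opposite_pair.normal_points B i j"
    using x by (rule basis_index_cases)
  obtain i' j' P' where y': "y = ((i', j'), P')" "(i', j') \<in> opposite_pairs" and ij': "opposite_pair B c i' j'"
    and P': "P' \<in> opposite_pair.normal_points B i' j'"
    using y by (rule basis_index_cases)
  obtain z where z: "z \<in> opposite_pair.component B i j P" "\<beta> = independent_pair.exponent_of B c i j z"
    using opposite_pair.component_solution_support[OF ij, of P \<beta>] assms(3) x' by (auto simp: basis_solution_def)
  obtain z' where z': "z' \<in> opposite_pair.component B i' j' P'" "\<beta> = independent_pair.exponent_of B c i' j' z'"
    using opposite_pair.component_solution_support[OF ij', of P' \<beta>] assms(4) y' by (auto simp: basis_solution_def)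
  have ij_int: "t i \<beta> \<in> \<int>" "t j \<beta> \<in> \<int>"
    unfolding z(2) using opposite_pair.axioms(1)[OF ij] by (simp_all add: independent_pair.row_form_exponent_of)
  have ij'_int: "t i' \<beta> \<in> \<int>" "t j' \<beta> \<in> \<int>"
    unfolding z'(2) using opposite_pair.axioms(1)[OF ij'] by (simp_all add: independent_pair.row_form_exponent_of)
  have "i < j" "i' < j'"
    using x'(2) y'(2) by (simp_all add: opposite_pairs_def)
  moreover have "i' = i \<or> i' = j" "j' = i \<or> j' = j"
    using at_most_two_integral_rows[OF _ ij_int] ij'_int \<open>i < j\<close> by simp_all
  ultimately have "i' = i" "j' = j"
    by auto
  then have "z' = z"
    using z z' independent_pair.inj_exponent_of[OF opposite_pair.axioms(1)[OF ij]] by (auto dest: injD)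
  then have "P' = P"
    using opposite_pair.component_unique[OF ij] z(1) z'(1) P P' \<open>i' = i\<close> \<open>j' = j\<close>
    by (simp add: opposite_pair.normal_points_def[OF ij])
  then show ?thesis
    using x' y' \<open>i' = i\<close> \<open>j' = j\<close> by simp
qed

lemma solution_support_covered:
  assumes sol: "a \<in> horn_puiseux_solutions B c" and nz: "a \<beta> \<noteq> 0"
  shows "\<exists>x\<in>basis_index. basis_solution x \<beta> \<noteq> 0"
proof -
  obtain i j where "i < j" "det2 (B i) (B j) \<noteq> 0" "opposite_open_quadrants (B i) (B j)"
    and int: "t i \<beta> \<in> \<int>" "t j \<beta> \<in> \<int>"
    using solution_support_opposite_pair[OF sol nz] by blast
  then have ij: "(i, j) \<in> opposite_pairs" and opp: "opposite_pair B c i j"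
    using opposite_pair_of by (auto simp: opposite_pairs_def)
  interpret opposite_pair B c i j
    by (rule opp)
  obtain z where z: "\<beta> = exponent_of z"
    using exponent_of_surj[OF int] .
  then obtain P where P: "R.normal P" "z \<in> component P"
    using solution_support_in_component[OF sol] nz by blast
  then have "component_solution P \<beta> \<noteq> 0"
    using gamma_coeff_nonzero z by (simp add: component_solution_def gamma_on_exponent_of component_def)
  moreover have "((i, j), P) \<in> basis_index"
    using ij P by (simp add: basis_index_def normal_points_def)
  ultimately show ?thesis
    by (intro bexI[of _ "((i, j), P)"]) (simp_all add: basis_solution_def)
qed

definition basis_coeff :: "puiseux \<Rightarrow> ('r \<times> 'r) \<times> (int \<times> int) \<Rightarrow> complex" where
  "basis_coeff a x = a (basis_peak x) / gamma_coeff B c (basis_peak x)"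

lemma solution_on_basis_support:
  assumes sol: "a \<in> horn_puiseux_solutions B c" and x: "x \<in> basis_index"
    and nz: "basis_solution x \<beta> \<noteq> 0"
  shows "a \<beta> = basis_coeff a x * basis_solution x \<beta>"
proof -
  obtain i j P where x': "x = ((i, j), P)" and ij: "opposite_pair B c i j"
    and P: "P \<in> opposite_pair.normal_points B i j"
    using x by (rule basis_index_cases)
  interpret opposite_pair B c i j
    by (rule ij)
  obtain z where "z \<in> component P" "\<beta> = exponent_of z"
    using component_solution_support[of P \<beta>] nz x' by (auto simp: basis_solution_def)
  then show ?thesis
    using solution_on_component[OF sol] P x'
    by (simp add: basis_coeff_def basis_peak_def basis_solution_def normal_points_def)
qed

lemma horn_solutions_eq_span: "horn_puiseux_solutions B c = ps.span (basis_solution ` basis_index)"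
proof
  show "ps.span (basis_solution ` basis_index) \<subseteq> horn_puiseux_solutions B c"
    using basis_solution_in_solutions horn_solutions_subspace by (intro ps.span_minimal) auto
  show "horn_puiseux_solutions B c \<subseteq> ps.span (basis_solution ` basis_index)"
  proof
    fix a assume sol: "a \<in> horn_puiseux_solutions B c"
    have "a = (\<Sum>x\<in>basis_index. cscale (basis_coeff a x) (basis_solution x))"
      using finite_basis_index basis_supports_disjoint solution_support_covered[OF sol]
        solution_on_basis_support[OF sol]
      by (rule sum_disjoint_supports)
    also have "\<dots> \<in> ps.span (basis_solution ` basis_index)"
      by (intro ps.span_sum ps.span_scale ps.span_base) auto
    finally show "a \<in> ps.span (basis_solution ` basis_index)" .
  qed
qed

lemma rank_p_eq:
  "rank_p_finite B c \<and> rank_p B c = (\<Sum>(i, j)\<in>opposite_pairs. nu (B i) (B j))"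
proof
  show "rank_p_finite B c"
    unfolding rank_p_finite_def using horn_solutions_eq_span finite_basis_index by blast
  have indep: "ps.independent (basis_solution ` basis_index)"
    using finite_basis_index basis_solution_peak basis_supports_disjoint
    by (rule independent_disjoint_supports(1))
  have inj: "inj_on basis_solution basis_index"
    using finite_basis_index basis_solution_peak basis_supports_disjoint
    by (rule independent_disjoint_supports(2))
  have "rank_p B c = card (basis_solution ` basis_index)"
    unfolding rank_p_def horn_solutions_eq_span by (rule ps.dim_span_eq_card_independent[OF indep])
  also have "\<dots> = card basis_index"
    using inj by (rule card_image)
  finally show "rank_p B c = (\<Sum>(i, j)\<in>opposite_pairs. nu (B i) (B j))"
    using card_basis_index by simp
qed

end

theorem theorem6p6:
  fixes B :: "'n::{finite,linorder} \<Rightarrow> int \<times> int"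
  assumes n_gt_2: "CARD('n) > 2"
    and rank2: "\<exists>i j. det2 (B i) (B j) \<noteq> 0"
    and rows_sum_zero: "(\<Sum>j\<in>UNIV. B j) = (0, 0)"
  shows "\<exists>E :: (complex ^ ('n::{finite,linorder})) set. E \<in> null_sets lebesgue \<and>
           (\<forall>c. c \<notin> E \<longrightarrow>
              rank_p_finite B c \<and>
              rank_p B c = (\<Sum>(i, j)\<in>{(i, j). i < j \<and> det2 (B i) (B j) \<noteq> 0
                                      \<and> opposite_open_quadrants (B i) (B j)}.
                              nu (B i) (B j)))"
proof (intro exI[of _ nongeneric_params] conjI allI impI)
  show "nongeneric_params \<in> null_sets lebesgue"
    by (rule nongeneric_params_null)
  fix c :: "complex ^ ('n::{finite,linorder})"
  assume "c \<notin> nongeneric_params"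
  then have "generic_params c"
    by (auto simp: generic_params_def nongeneric_params_def)
  then show "rank_p_finite B c"
    "rank_p B c = (\<Sum>(i, j)\<in>{(i, j). i < j \<and> det2 (B i) (B j) \<noteq> 0
                                      \<and> opposite_open_quadrants (B i) (B j)}. nu (B i) (B j))"
    using generic_params.rank_p_eq[of c B] by (simp_all add: generic_params.opposite_pairs_def)
qed

end
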